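(* Let $\Omega$ be a finite set of $n$ items, let $k,l\ge 1$ be integers, and let $f_1,\dots,f_m:2^\Omega\to\mathbb{R}_{\ge 0}$ be monotone non-decreasing submodular functions. Then the algorithm $\textsf{Sampling-Greedy}$ returns a random set $S\subseteq\Omega$ with $|S|\le l$ such that $$\mathbb{E}_S[F(S)]\;\ge\;\frac{1-1/e^2}{2}\,F(O),$$ where $O\in\arg\max_{S'\subseteq\Omega,\ |S'|\le l}F(S')$.
   Context: Define $F(S)=\sum_{i=1}^m\max_{A\subseteq S,\ |A|\le k} f_i(A)$. Submodularity of $f_i$: $f_i(A\cup\{x\})-f_i(A)\ge f_i(A'\cup\{x\})-f_i(A')$ for $A\subseteq A'$, $x\notin A'$. Notation: add a set $\Phi$ of $l$ dummy items and let $\Omega'=\Omega\cup\Phi$; extend each $f_i$ by $f_i(A)=f_i(A\cap\Omega)$ for $A\subseteq\Omega'$. Let $\Delta_i(x,A)=f_i(A\cup\{x\})-f_i(A)$; for $y\in A$, $\nabla_i(x,y,A)=f_i((A\setminus\{y\})\cup\{x\})-f_i(A)$; for $|A|\le k$: $\nabla_i(x,A)=0$ if $x\in A$; $\nabla_i(x,A)=\max\{0,\max_{y\in A}\nabla_i(x,y,A),\Delta_i(x,A)\}$ if $x\notin A$, $|A|<k$; $\nabla_i(x,A)=\max\{0,\max_{y\in A}\nabla_i(x,y,A)\}$ if $x\notin A$, $|A|=k$. Define $\textsf{Rep}_i(x,A)$ to be $\emptyset$ if $\nabla_i(x,A)=0$, or if $\nabla_i(x,A)>0$, $|A|<k$ and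 $\max_{y\in A}\nabla_i(x,y,A)<\Delta_i(x,A)$; otherwise it is $\{y^*\}$ for some $y^*\in\arg\max_{y\in A}\nabla_i(x,y,A)$. $\textsf{Trim}(B,f_i)$: start with $A\leftarrow B$, go once through the elements of $B$ in a fixed order and remove an element $x$ currently in $A$ whenever $f_i(A)-f_i(A\setminus\{x\})<0$; return $A$. $\textsf{Sampling-Greedy}$: initialize $S\leftarrow\emptyset$ and $T_i\leftarrow\emptyset$ for all $i\in[m]$. Repeat $l$ times: let $M$ be a set of exactly $l$ items of $\Omega'$ maximizing $\sum_{x\in M}\sum_{i=1}^m\nabla_i(x,T_i)$; pick $x^*$ uniformly at random from $M$ and set $S\leftarrow S\cup\{x^*\}$; for each $i\in[m]$ with $\nabla_i(x^*,T_i)>0$, set $T_i\leftarrow (T_i\setminus\textsf{Rep}_i(x^*,T_i))\cup\{x^*\}$ and then $T_i\leftarrow\textsf{Trim}(T_i,f_i)$. Finally output $S$ with dummy items removed (i.e. $S\cap\Omega$). *)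

theory Defs
  imports "HOL-Probability.Probability_Mass_Function"
begin

text \<open>Items of the ground set have type 'a; the extended ground set
  Omega' = Omega \<union> Phi lives in type 'a + nat: real items are Inl x (x \<in> Omega),
  the l dummy items are Inr j (j < l).\<close>

definition groundExt :: "'a set \<Rightarrow> nat \<Rightarrow> ('a + nat) set" where
  "groundExt \<Omega> l = Inl ` \<Omega> \<union> Inr ` {..<l}"

definition Fobj :: "(nat \<Rightarrow> 'a set \<Rightarrow> real) \<Rightarrow> nat \<Rightarrow> nat \<Rightarrow> 'a set \<Rightarrow> real" where
  "Fobj f m k S = (\<Sum>i<m. Max (f i ` {A. A \<subseteq> S \<and> card A \<le> k}))"

definition fext :: "(nat \<Rightarrow> 'a set \<Rightarrow> real) \<Rightarrow> nat \<Rightarrow> ('a + nat) set \<Rightarrow> real" where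
  "fext f i A = f i (Inl -` A)"

definition Delta :: "(nat \<Rightarrow> 'a set \<Rightarrow> real) \<Rightarrow> nat \<Rightarrow> 'a + nat \<Rightarrow> ('a + nat) set \<Rightarrow> real" where
  "Delta f i x A = fext f i (insert x A) - fext f i A"

definition Nabla3 :: "(nat \<Rightarrow> 'a set \<Rightarrow> real) \<Rightarrow> nat \<Rightarrow> 'a + nat \<Rightarrow> 'a + nat \<Rightarrow> ('a + nat) set \<Rightarrow> real" where
  "Nabla3 f i x y A = fext f i (insert x (A - {y})) - fext f i A"

definition Nabla :: "(nat \<Rightarrow> 'a set \<Rightarrow> real) \<Rightarrow> nat \<Rightarrow> nat \<Rightarrow> 'a + nat \<Rightarrow> ('a + nat) set \<Rightarrow> real" where
  "Nabla f k i x A =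
     (if x \<in> A then 0
      else Max ({0} \<union> (\<lambda>y. Nabla3 f i x y A) ` A \<union> (if card A < k then {Delta f i x A} else {})))"

text \<open>Rep_i(x, A); the choice of y* in the argmax is made by the selector rsel.\<close>
definition Rep :: "(nat \<Rightarrow> 'a set \<Rightarrow> real) \<Rightarrow> nat \<Rightarrow>
    (nat \<Rightarrow> 'a + nat \<Rightarrow> ('a + nat) set \<Rightarrow> 'a + nat) \<Rightarrow>
    nat \<Rightarrow> 'a + nat \<Rightarrow> ('a + nat) set \<Rightarrow> ('a + nat) set" where
  "Rep f k rsel i x A =
     (if Nabla f k i x A = 0 \<or>
         (Nabla f k i x A > 0 \<and> card A < k \<and> (\<forall>y\<in>A. Nabla3 f i x y A < Delta f i x A))
      then {} else {rsel i x A})"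

fun trimPass :: "(('a + nat) set \<Rightarrow> real) \<Rightarrow> ('a + nat) list \<Rightarrow> ('a + nat) set \<Rightarrow> ('a + nat) set" where
  "trimPass g [] A = A"
| "trimPass g (x # xs) A =
     trimPass g xs (if x \<in> A \<and> g A - g (A - {x}) < 0 then A - {x} else A)"

text \<open>Trim(B, f_i), where ord is the fixed order on Omega' (a list enumerating it).\<close>
definition Trim :: "('a + nat) list \<Rightarrow> ('a + nat) set \<Rightarrow> (('a + nat) set \<Rightarrow> real) \<Rightarrow> ('a + nat) set" where
  "Trim ord B g = trimPass g (filter (\<lambda>x. x \<in> B) ord) B"

type_synonym 'a sg_state = "('a + nat) set \<times> (nat \<Rightarrow> ('a + nat) set)"

definition sgStep :: "(nat \<Rightarrow> 'a set \<Rightarrow> real) \<Rightarrow> nat \<Rightarrow> nat \<Rightarrow>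
    ('a sg_state \<Rightarrow> ('a + nat) set) \<Rightarrow>
    (nat \<Rightarrow> 'a + nat \<Rightarrow> ('a + nat) set \<Rightarrow> 'a + nat) \<Rightarrow> ('a + nat) list \<Rightarrow>
    'a sg_state \<Rightarrow> 'a sg_state pmf" where
  "sgStep f m k selM rsel ord st =
     map_pmf (\<lambda>x. (insert x (fst st),
                   \<lambda>i. if i < m \<and> Nabla f k i x (snd st i) > 0
                       then Trim ord ((snd st i - Rep f k rsel i x (snd st i)) \<union> {x}) (fext f i)
                       else snd st i))
       (pmf_of_set (selM st))"

definition samplingGreedy :: "(nat \<Rightarrow> 'a set \<Rightarrow> real) \<Rightarrow> nat \<Rightarrow> nat \<Rightarrow> nat \<Rightarrow>
    ('a sg_state \<Rightarrow> ('a + nat) set) \<Rightarrow>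
    (nat \<Rightarrow> 'a + nat \<Rightarrow> ('a + nat) set \<Rightarrow> 'a + nat) \<Rightarrow> ('a + nat) list \<Rightarrow> 'a set pmf" where
  "samplingGreedy f m k l selM rsel ord =
     map_pmf (\<lambda>st. Inl -` fst st)
       (((\<lambda>p. bind_pmf p (sgStep f m k selM rsel ord)) ^^ l) (return_pmf ({}, \<lambda>i. {})))"

text \<open>Admissible tie-breaking: selM returns a set of exactly l items of Omega'
  maximizing sum_{x \<in> M} sum_i Nabla_i(x, T_i).\<close>
definition validSelM :: "(nat \<Rightarrow> 'a set \<Rightarrow> real) \<Rightarrow> nat \<Rightarrow> nat \<Rightarrow> 'a set \<Rightarrow> nat \<Rightarrow>
    ('a sg_state \<Rightarrow> ('a + nat) set) \<Rightarrow> bool" where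
  "validSelM f m k \<Omega> l selM \<longleftrightarrow>
     (\<forall>st. selM st \<subseteq> groundExt \<Omega> l \<and> card (selM st) = l \<and>
        (\<forall>M'. M' \<subseteq> groundExt \<Omega> l \<and> card M' = l \<longrightarrow>
           (\<Sum>x\<in>M'. \<Sum>i<m. Nabla f k i x (snd st i)) \<le>
           (\<Sum>x\<in>selM st. \<Sum>i<m. Nabla f k i x (snd st i))))"

definition validRsel :: "(nat \<Rightarrow> 'a set \<Rightarrow> real) \<Rightarrow>
    (nat \<Rightarrow> 'a + nat \<Rightarrow> ('a + nat) set \<Rightarrow> 'a + nat) \<Rightarrow> bool" where
  "validRsel f rsel \<longleftrightarrow>
     (\<forall>i x A. finite A \<and> A \<noteq> {} \<longrightarrow>
        rsel i x A \<in> A \<and> (\<forall>y\<in>A. Nabla3 f i x y A \<le> Nabla3 f i x (rsel i x A) A))"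

end

theory Submission
  imports Defs
begin

text \<open>Follow the potential \<open>\<Phi> = f\<^sub>1(T\<^sub>1) + \<dots> + f\<^sub>m(T\<^sub>m)\<close>, which never exceeds
  \<open>F(S)\<close> since each \<open>T\<^sub>i\<close> is a subset of \<open>S\<close> with at most \<open>k\<close> items. Picking \<open>x\<close>
  raises \<open>\<Phi>\<close> by exactly its total gain \<open>\<nabla>\<^sub>1(x, T\<^sub>1) + \<dots> + \<nabla>\<^sub>m(x, T\<^sub>m)\<close>, because Trim
  removes nothing when the \<open>f\<^sub>i\<close> are monotone. The set \<open>M\<close> has at least the total gain of
  \<open>O\<close> padded with dummy items, and an exchange argument, which matches the items of a best
  \<open>k\<close>-subset \<open>O\<^sub>i\<close> of \<open>O\<close> with distinct items of \<open>T\<^sub>i\<close>, bounds the gains of \<open>O\<close> for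
  \<open>f\<^sub>i\<close> from below by \<open>f\<^sub>i(O\<^sub>i) - 2 f\<^sub>i(T\<^sub>i)\<close>. Averaging over \<open>x \<in> M\<close> gives
  \<open>E \<Phi>\<^sub>t\<^sub>+\<^sub>1 \<ge> (1 - 2/l) E \<Phi>\<^sub>t + F(O)/l\<close>, hence
  \<open>E \<Phi>\<^sub>l \<ge> (1 - (1 - 2/l)\<^sup>l) F(O)/2 \<ge> (1 - e\<^sup>-\<^sup>2) F(O)/2\<close>.\<close>

locale monotone_submodular =
  fixes U :: "'b set" and g :: "'b set \<Rightarrow> real"
  assumes finite_ground: "finite U"
    and nonneg: "A \<subseteq> U \<Longrightarrow> 0 \<le> g A"
    and mono: "A \<subseteq> B \<Longrightarrow> B \<subseteq> U \<Longrightarrow> g A \<le> g B"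
    and submodular: "A \<subseteq> A' \<Longrightarrow> A' \<subseteq> U \<Longrightarrow> x \<in> U \<Longrightarrow> x \<notin> A' \<Longrightarrow>
                       g (insert x A') - g A' \<le> g (insert x A) - g A"
begin

lemma sum_marginal_gains_ge:
  assumes "B \<subseteq> U" "T \<subseteq> U" "B \<inter> T = {}"
  shows "g (B \<union> T) - g T \<le> (\<Sum>x\<in>B. g (insert x T) - g T)"
proof -
  have "finite B" using assms(1) finite_ground finite_subset by blast
  then show ?thesis using assms(1,3)
  proof (induction B rule: finite_induct)
    case (insert x B)
    have "g (insert x (B \<union> T)) - g (B \<union> T) \<le> g (insert x T) - g T"
      using submodular[of T "B \<union> T" x] insert assms(2) by auto
    then show ?case using insert by simp
  qed simp
qed

lemma sum_removal_losses_le: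
  assumes "T \<subseteq> U" "Y \<subseteq> T"
  shows "(\<Sum>y\<in>Y. g T - g (T - {y})) \<le> g T - g (T - Y)"
proof -
  have "finite Y" using finite_subset[OF assms(2) finite_subset[OF assms(1) finite_ground]] .
  then show ?thesis using assms(2)
  proof (induction Y rule: finite_induct)
    case (insert y Y)
    have y: "y \<in> U" "y \<notin> T - {y}" using insert.prems assms(1) by auto
    have "g (insert y (T - {y})) - g (T - {y}) \<le> g (insert y (T - insert y Y)) - g (T - insert y Y)"
      by (rule submodular[OF _ _ y]) (use assms(1) in auto)
    moreover have "insert y (T - insert y Y) = T - Y" "insert y (T - {y}) = T"
      using insert by auto
    moreover have "(\<Sum>y\<in>Y. g T - g (T - {y})) \<le> g T - g (T - Y)"
      using insert by simp
    ultimately show ?case using insert.hyps by simp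
  qed simp
qed

lemma swap_gain_ge:
  assumes "T \<subseteq> U" "x \<in> U" "x \<notin> T"
  shows "g (insert x T) - g T - (g T - g (T - {y})) \<le> g (insert x (T - {y})) - g T"
  using submodular[of "T - {y}" T x] assms by auto

text \<open>One \<open>g T\<close> pays for removing the distinct items \<open>\<pi> x\<close> from \<open>T\<close>.\<close>
lemma sum_swap_gains_ge:
  assumes T: "T \<subseteq> U" and B: "B \<subseteq> U" "B \<inter> T = {}"
    and \<pi>: "inj_on \<pi> B" "\<pi> ` B \<subseteq> T"
  shows "g (B \<union> T) - 2 * g T \<le> (\<Sum>x\<in>B. g (insert x (T - {\<pi> x})) - g T)"
proof -
  have "(\<Sum>x\<in>B. g T - g (T - {\<pi> x})) = (\<Sum>y\<in>\<pi> ` B. g T - g (T - {y}))"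
    using sum.reindex[OF \<pi>(1), of "\<lambda>y. g T - g (T - {y})"] by simp
  also have "\<dots> \<le> g T - g (T - \<pi> ` B)"
    using sum_removal_losses_le[OF T \<pi>(2)] .
  also have "\<dots> \<le> g T"
    using nonneg[of "T - \<pi> ` B"] T by auto
  finally have loss: "(\<Sum>x\<in>B. g T - g (T - {\<pi> x})) \<le> g T" .
  have "(\<Sum>x\<in>B. g (insert x T) - g T) - (\<Sum>x\<in>B. g T - g (T - {\<pi> x}))
        = (\<Sum>x\<in>B. g (insert x T) - g T - (g T - g (T - {\<pi> x})))"
    by (rule sum_subtractf[symmetric])
  also have "\<dots> \<le> (\<Sum>x\<in>B. g (insert x (T - {\<pi> x})) - g T)"
    using T B by (intro sum_mono swap_gain_ge) auto
  finally show ?thesis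
    using sum_marginal_gains_ge[OF B(1) T B(2)] loss by linarith
qed

end

lemma monotone_submodular_vimage_Inl:
  assumes "monotone_submodular \<Omega> h"
  shows "monotone_submodular (groundExt \<Omega> l) (\<lambda>A. h (Inl -` A))"
proof -
  interpret monotone_submodular \<Omega> h by fact
  have vim: "Inl -` A \<subseteq> \<Omega>" if "A \<subseteq> groundExt \<Omega> l" for A :: "('a + nat) set"
    using that by (auto simp: groundExt_def)
  show ?thesis
  proof
    fix A A' :: "('a + nat) set" and x
    assume A: "A \<subseteq> A'" "A' \<subseteq> groundExt \<Omega> l" and x: "x \<in> groundExt \<Omega> l" "x \<notin> A'"
    show "h (Inl -` insert x A') - h (Inl -` A') \<le> h (Inl -` insert x A) - h (Inl -` A)"
    proof (cases x)
      case (Inl a)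
      then have "a \<in> \<Omega>" "a \<notin> Inl -` A'" using x by (auto simp: groundExt_def)
      moreover have "Inl -` insert x B = insert a (Inl -` B)" for B :: "('a + nat) set"
        using Inl by auto
      ultimately show ?thesis
        using Inl submodular[of "Inl -` A" "Inl -` A'" a] vim[OF A(2)] vimage_mono[OF A(1), of Inl] by auto
    next
      case (Inr b)
      then have "Inl -` insert x B = Inl -` B" for B :: "('a + nat) set" by auto
      then show ?thesis by simp
    qed
  qed (use finite_ground vim nonneg mono[OF vimage_mono vim] in \<open>auto simp: groundExt_def\<close>)
qed

lemma trimPass_eq_self:
  assumes "\<And>x. x \<in> A \<Longrightarrow> g (A - {x}) \<le> g A"
  shows "trimPass g xs A = A"
proof (induction xs)
  case (Cons a xs)
  have "\<not> (a \<in> A \<and> g A - g (A - {a}) < 0)" using assms by force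
  then show ?case using Cons.IH by auto
qed simp

lemma Trim_eq_self:
  assumes "\<And>x. x \<in> A \<Longrightarrow> g (A - {x}) \<le> g A"
  shows "Trim ord A g = A"
  unfolding Trim_def using assms by (rule trimPass_eq_self)

lemma Nabla_nonneg: "finite A \<Longrightarrow> 0 \<le> Nabla f k i x A"
  unfolding Nabla_def by (auto intro: Max_ge)

lemma Delta_le_Nabla: "finite A \<Longrightarrow> x \<notin> A \<Longrightarrow> card A < k \<Longrightarrow> Delta f i x A \<le> Nabla f k i x A"
  unfolding Nabla_def by (auto intro: Max_ge)

lemma Nabla3_le_Nabla: "finite A \<Longrightarrow> x \<notin> A \<Longrightarrow> y \<in> A \<Longrightarrow> Nabla3 f i x y A \<le> Nabla f k i x A"
  unfolding Nabla_def by (auto intro: Max_ge)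

lemma Nabla_pos_attained:
  assumes "finite A" "0 < Nabla f k i x A"
  shows "x \<notin> A"
    and "(\<exists>y\<in>A. Nabla f k i x A = Nabla3 f i x y A) \<or> (card A < k \<and> Nabla f k i x A = Delta f i x A)"
proof -
  show x: "x \<notin> A" using assms(2) unfolding Nabla_def by auto
  let ?S = "{0} \<union> (\<lambda>y. Nabla3 f i x y A) ` A \<union> (if card A < k then {Delta f i x A} else {})"
  have "Nabla f k i x A = Max ?S"
    unfolding Nabla_def using x by (simp only: if_False)
  moreover have "Max ?S \<in> ?S"
    using assms(1) by (intro Max_in) auto
  ultimately have "Nabla f k i x A \<in> ?S" by simp
  then show "(\<exists>y\<in>A. Nabla f k i x A = Nabla3 f i x y A) \<or> (card A < k \<and> Nabla f k i x A = Delta f i x A)"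
    using assms(2) by (auto split: if_splits)
qed

lemma Nabla_eq_Delta:
  assumes "finite A" "0 < Nabla f k i x A" "card A < k" "\<forall>y\<in>A. Nabla3 f i x y A < Delta f i x A"
  shows "Nabla f k i x A = Delta f i x A"
proof -
  have "Delta f i x A \<le> Nabla f k i x A"
    using Delta_le_Nabla[OF assms(1) Nabla_pos_attained(1)[OF assms(1,2)] assms(3)] .
  then show ?thesis
    using Nabla_pos_attained(2)[OF assms(1,2)] assms(4) by force
qed

lemma Nabla_eq_Nabla3_rsel:
  assumes rsel: "validRsel f rsel" and A: "finite A" "A \<noteq> {}" and pos: "0 < Nabla f k i x A"
    and not_add: "\<not> (card A < k \<and> (\<forall>y\<in>A. Nabla3 f i x y A < Delta f i x A))"
  shows "Nabla f k i x A = Nabla3 f i x (rsel i x A) A"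
proof -
  have ys: "rsel i x A \<in> A" "\<forall>y\<in>A. Nabla3 f i x y A \<le> Nabla3 f i x (rsel i x A) A"
    using rsel A unfolding validRsel_def by auto
  have "Nabla f k i x A \<le> Nabla3 f i x (rsel i x A) A"
    using Nabla_pos_attained[OF A(1) pos] ys not_add by force
  moreover have "Nabla3 f i x (rsel i x A) A \<le> Nabla f k i x A"
    using Nabla3_le_Nabla[OF A(1) Nabla_pos_attained(1)[OF A(1) pos] ys(1)] .
  ultimately show ?thesis by linarith
qed

lemma Rep_update:
  assumes rsel: "validRsel f rsel" and k: "1 \<le> k"
    and T: "finite T" "card T \<le> k" and pos: "0 < Nabla f k i x T"
  defines "T' \<equiv> (T - Rep f k rsel i x T) \<union> {x}"
  shows "T' \<subseteq> insert x T" "card T' \<le> k" "fext f i T' = fext f i T + Nabla f k i x T"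
proof -
  have x: "x \<notin> T" using Nabla_pos_attained(1)[OF T(1) pos] .
  show "T' \<subseteq> insert x T" unfolding T'_def by auto
  have "card T' \<le> k \<and> fext f i T' = fext f i T + Nabla f k i x T"
  proof (cases "card T < k \<and> (\<forall>y\<in>T. Nabla3 f i x y T < Delta f i x T)")
    case True
    then have "T' = insert x T" unfolding T'_def Rep_def using pos by auto
    then show ?thesis
      using True Nabla_eq_Delta[OF T(1) pos] T(1) x by (simp add: Delta_def)
  next
    case False
    then have ne: "T \<noteq> {}" using k by auto
    then have y: "rsel i x T \<in> T" using rsel T(1) unfolding validRsel_def by auto
    have "T' = insert x (T - {rsel i x T})"
      unfolding T'_def Rep_def using pos False by auto
    moreover have "card (insert x (T - {rsel i x T})) = card T"
      using y x T(1) ne by (simp add: card_gt_0_iff)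
    ultimately show ?thesis
      using Nabla_eq_Nabla3_rsel[OF rsel T(1) ne pos False] T(2) by (simp add: Nabla3_def)
  qed
  then show "card T' \<le> k" "fext f i T' = fext f i T + Nabla f k i x T" by auto
qed

text \<open>If \<open>|T| < k\<close> the items of \<open>Q - T\<close> can simply be added; otherwise each of them is
  swapped against its own item of \<open>T - Q\<close>.\<close>
lemma sum_Nabla_ge:
  assumes "monotone_submodular U (fext f i)"
    and T: "T \<subseteq> U" "card T \<le> k" and Q: "Q \<subseteq> U" "card Q \<le> k"
  shows "fext f i Q - 2 * fext f i T \<le> (\<Sum>x\<in>Q - T. Nabla f k i x T)"
proof -
  interpret monotone_submodular U "fext f i" by fact
  have fin: "finite T" "finite Q" using T Q finite_ground finite_subset by blast+
  have QT: "(Q - T) \<union> T = Q \<union> T" by auto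
  have gQ: "fext f i Q \<le> fext f i (Q \<union> T)" using mono T Q by auto
  have gT: "0 \<le> fext f i T" using nonneg T by auto
  show ?thesis
  proof (cases "card T < k")
    case True
    have "(\<Sum>x\<in>Q - T. Delta f i x T) \<le> (\<Sum>x\<in>Q - T. Nabla f k i x T)"
      using Delta_le_Nabla fin True by (intro sum_mono) auto
    moreover have "fext f i (Q \<union> T) - fext f i T \<le> (\<Sum>x\<in>Q - T. Delta f i x T)"
      using sum_marginal_gains_ge[of "Q - T" T] Q T QT by (auto simp: Delta_def)
    ultimately show ?thesis using gQ gT by linarith
  next
    case False
    have "card (Q - T) \<le> card (T - Q)"
      using False T(2) Q(2) fin card_Diff_subset_Int[of Q T] card_Diff_subset_Int[of T Q]
      by (simp add: card_Diff_subset_Int Int_commute)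
    then obtain \<pi> where \<pi>: "\<pi> ` (Q - T) \<subseteq> T - Q" "inj_on \<pi> (Q - T)"
      using card_le_inj[of "Q - T" "T - Q"] fin by auto
    have "(\<Sum>x\<in>Q - T. Nabla3 f i x (\<pi> x) T) \<le> (\<Sum>x\<in>Q - T. Nabla f k i x T)"
      using fin \<pi>(1) by (intro sum_mono Nabla3_le_Nabla) (auto simp: image_subset_iff)
    moreover have "fext f i (Q \<union> T) - 2 * fext f i T \<le> (\<Sum>x\<in>Q - T. Nabla3 f i x (\<pi> x) T)"
      using sum_swap_gains_ge[of T "Q - T" \<pi>] T Q \<pi> QT by (auto simp: Nabla3_def)
    ultimately show ?thesis using gQ by linarith
  qed
qed

text \<open>For \<open>l = 1\<close> the factor \<open>1 - 2/l\<close> is negative, so the monotonicity of \<open>a\<close> is needed.\<close>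
lemma recurrence_lower_bound:
  fixes a :: "nat \<Rightarrow> real" and l :: nat and c :: real
  assumes l: "1 \<le> l" and c: "0 \<le> c" and a0: "0 \<le> a 0"
    and step: "\<And>t. (1 - 2 / l) * a t + c / l \<le> a (Suc t)"
    and incr: "\<And>t. a t \<le> a (Suc t)"
  shows "(1 - 1 / exp 2) / 2 * c \<le> a l"
proof (cases "l = 1")
  case True
  then have "c / 2 \<le> a l" using step[of 0] incr[of 0] by simp
  moreover have "(1 - 1 / exp 2) / 2 * c \<le> 1 / 2 * c" using c by (intro mult_right_mono) auto
  ultimately show ?thesis by linarith
next
  case False
  define q where "q = 1 - 2 / real l"
  have q: "0 \<le> q" unfolding q_def using False l by (simp add: field_simps)
  have gap: "c / 2 - a t \<le> q ^ t * (c / 2 - a 0)" for t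
  proof (induction t)
    case (Suc t)
    have "c / 2 - a (Suc t) \<le> q * (c / 2 - a t)"
      using step[of t] l unfolding q_def by (simp add: field_simps)
    also have "\<dots> \<le> q * (q ^ t * (c / 2 - a 0))" using Suc q by (rule mult_left_mono)
    finally show ?case by simp
  qed simp
  have "q ^ l \<le> exp (- 2 / real l) ^ l"
    using exp_ge_add_one_self[of "- 2 / real l"] q unfolding q_def by (intro power_mono) auto
  also have "\<dots> = 1 / exp 2"
    using l by (simp add: exp_of_nat_mult[symmetric] exp_minus field_simps)
  finally have "q ^ l * (c / 2) \<le> 1 / exp 2 * (c / 2)"
    using c by (intro mult_right_mono) auto
  moreover have "q ^ l * (c / 2 - a 0) \<le> q ^ l * (c / 2)"
    using q a0 by (intro mult_left_mono) auto
  ultimately have "q ^ l * (c / 2 - a 0) \<le> 1 / exp 2 * (c / 2)" by linarith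
  moreover have "(1 - 1 / exp 2) / 2 * c = c / 2 - 1 / exp 2 * (c / 2)"
    by (simp add: field_simps)
  ultimately show ?thesis using gap[of l] by linarith
qed

lemma expectation_le_bind:
  fixes p :: "'a pmf" and K :: "'a \<Rightarrow> 'b pmf" and h :: "'a \<Rightarrow> real" and \<phi> :: "'b \<Rightarrow> real"
  assumes "finite (set_pmf p)" "\<And>a. a \<in> set_pmf p \<Longrightarrow> finite (set_pmf (K a))"
    and "\<And>a. a \<in> set_pmf p \<Longrightarrow> h a \<le> measure_pmf.expectation (K a) \<phi>"
  shows "measure_pmf.expectation p h \<le> measure_pmf.expectation (bind_pmf p K) \<phi>"
proof -
  have "measure_pmf.expectation p h = (\<Sum>a\<in>set_pmf p. pmf p a * h a)"
    using integral_measure_pmf_real[OF assms(1)] by (simp add: mult.commute)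
  also have "\<dots> \<le> (\<Sum>a\<in>set_pmf p. pmf p a * measure_pmf.expectation (K a) \<phi>)"
    using assms(3) by (intro sum_mono mult_left_mono) auto
  also have "\<dots> = measure_pmf.expectation (bind_pmf p K) \<phi>"
    using pmf_expectation_bind[of "set_pmf p" K p \<phi>] assms(1,2) by simp
  finally show ?thesis .
qed

lemma Max_bounded_subsets_attained:
  assumes "finite S"
  shows "\<exists>A. A \<subseteq> S \<and> card A \<le> k \<and> h A = Max (h ` {A. A \<subseteq> S \<and> card A \<le> k})"
proof -
  have "Max (h ` {A. A \<subseteq> S \<and> card A \<le> k}) \<in> h ` {A. A \<subseteq> S \<and> card A \<le> k}"
    using assms by (intro Max_in) auto
  then show ?thesis by auto
qed

lemma Fobj_nonneg:
  assumes "finite S" "\<And>i. i < m \<Longrightarrow> 0 \<le> f i {}"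
  shows "0 \<le> Fobj f m k S"
  unfolding Fobj_def
proof (rule sum_nonneg)
  fix i assume "i \<in> {..<m}"
  then have "f i {} \<le> Max (f i ` {A. A \<subseteq> S \<and> card A \<le> k})"
    using assms(1) by (intro Max_ge) auto
  then show "0 \<le> Max (f i ` {A. A \<subseteq> S \<and> card A \<le> k})"
    using assms(2) \<open>i \<in> {..<m}\<close> by force
qed

lemma card_vimage_Inl_le: "finite X \<Longrightarrow> card (Inl -` X) \<le> card X"
  by (rule card_inj_on_le[of Inl]) (auto simp: finite_vimageI)

lemma groundExt_padding:
  assumes "S \<subseteq> \<Omega>" "finite S" "card S \<le> l"
  shows "\<exists>M. Inl ` S \<subseteq> M \<and> M \<subseteq> groundExt \<Omega> l \<and> card M = l"
proof (intro exI conjI)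
  let ?M = "Inl ` S \<union> Inr ` {..<l - card S}"
  show "Inl ` S \<subseteq> ?M" "?M \<subseteq> groundExt \<Omega> l" using assms(1) by (auto simp: groundExt_def)
  have "card ?M = card (Inl ` S :: ('a + nat) set) + card (Inr ` {..<l - card S} :: ('a + nat) set)"
    using assms(2) by (intro card_Un_disjoint) auto
  then show "card ?M = l" using assms(3) by (simp add: card_image)
qed

locale sampling_greedy =
  fixes \<Omega> :: "'a set" and k l m :: nat and f :: "nat \<Rightarrow> 'a set \<Rightarrow> real"
    and selM :: "'a sg_state \<Rightarrow> ('a + nat) set"
    and rsel :: "nat \<Rightarrow> 'a + nat \<Rightarrow> ('a + nat) set \<Rightarrow> 'a + nat"
    and ord :: "('a + nat) list"
  assumes finite_ground: "finite \<Omega>" and k_pos: "1 \<le> k" and l_pos: "1 \<le> l"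
    and objectives: "\<And>i. i < m \<Longrightarrow> monotone_submodular \<Omega> (f i)"
    and selM_ok: "validSelM f m k \<Omega> l selM"
    and rsel_ok: "validRsel f rsel"
begin

abbreviation U :: "('a + nat) set" where "U \<equiv> groundExt \<Omega> l"

abbreviation gain :: "'a sg_state \<Rightarrow> 'a + nat \<Rightarrow> real" where
  "gain st x \<equiv> \<Sum>i<m. Nabla f k i x (snd st i)"

definition potential :: "'a sg_state \<Rightarrow> real" where
  "potential st = (\<Sum>i<m. fext f i (snd st i))"

definition state_inv :: "nat \<Rightarrow> 'a sg_state \<Rightarrow> bool" where
  "state_inv t st \<longleftrightarrow> fst st \<subseteq> U \<and> card (fst st) \<le> t \<and>
     (\<forall>i<m. snd st i \<subseteq> fst st \<and> card (snd st i) \<le> k)"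

definition greedy_update :: "'a sg_state \<Rightarrow> 'a + nat \<Rightarrow> 'a sg_state" where
  "greedy_update st x = (insert x (fst st),
     \<lambda>i. if i < m \<and> Nabla f k i x (snd st i) > 0
         then Trim ord ((snd st i - Rep f k rsel i x (snd st i)) \<union> {x}) (fext f i)
         else snd st i)"

definition state_pmf :: "nat \<Rightarrow> 'a sg_state pmf" where
  "state_pmf t = ((\<lambda>p. bind_pmf p (sgStep f m k selM rsel ord)) ^^ t) (return_pmf ({}, \<lambda>i. {}))"

lemma finite_U: "finite U"
  using finite_ground by (simp add: groundExt_def)

lemma fext_monotone_submodular: "i < m \<Longrightarrow> monotone_submodular U (fext f i)"
  using monotone_submodular_vimage_Inl[OF objectives] by (simp add: fext_def[abs_def])

lemma state_inv_finite:
  assumes "state_inv t st" "i < m"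
  shows "finite (snd st i)"
proof -
  have "snd st i \<subseteq> U" using assms unfolding state_inv_def by auto
  then show ?thesis using finite_U finite_subset by blast
qed

lemma selM: "selM st \<subseteq> U" "card (selM st) = l" "finite (selM st)" "selM st \<noteq> {}"
proof -
  show "selM st \<subseteq> U" "card (selM st) = l" using selM_ok unfolding validSelM_def by blast+
  then show "finite (selM st)" "selM st \<noteq> {}" using l_pos by (auto intro: card_ge_0_finite)
qed

lemma sgStep_eq: "sgStep f m k selM rsel ord st = map_pmf (greedy_update st) (pmf_of_set (selM st))"
  unfolding sgStep_def greedy_update_def by simp

lemma greedy_update_component:
  assumes inv: "state_inv t st" and x: "x \<in> U" and i: "i < m"
  shows "snd (greedy_update st x) i \<subseteq> insert x (fst st)"
    and "card (snd (greedy_update st x) i) \<le> k"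
    and "fext f i (snd (greedy_update st x) i) = fext f i (snd st i) + Nabla f k i x (snd st i)"
proof -
  let ?T = "snd st i"
  have T: "?T \<subseteq> fst st" "card ?T \<le> k" "fst st \<subseteq> U" using inv i unfolding state_inv_def by auto
  have fin: "finite ?T" using state_inv_finite[OF inv i] .
  interpret monotone_submodular U "fext f i" using fext_monotone_submodular[OF i] .
  have "snd (greedy_update st x) i \<subseteq> insert x ?T \<and> card (snd (greedy_update st x) i) \<le> k
        \<and> fext f i (snd (greedy_update st x) i) = fext f i ?T + Nabla f k i x ?T"
  proof (cases "0 < Nabla f k i x ?T")
    case True
    let ?T' = "(?T - Rep f k rsel i x ?T) \<union> {x}"
    have "?T' \<subseteq> U" using T x by auto
    then have "Trim ord ?T' (fext f i) = ?T'" by (intro Trim_eq_self mono) auto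
    then show ?thesis
      using True i Rep_update[OF rsel_ok k_pos fin T(2) True] by (simp add: greedy_update_def)
  next
    case False
    then have "Nabla f k i x ?T = 0" using Nabla_nonneg[OF fin, of f k i x] by linarith
    then show ?thesis using False T by (auto simp: greedy_update_def)
  qed
  then show "snd (greedy_update st x) i \<subseteq> insert x (fst st)"
    "card (snd (greedy_update st x) i) \<le> k"
    "fext f i (snd (greedy_update st x) i) = fext f i ?T + Nabla f k i x ?T"
    using T by auto
qed

lemma state_inv_greedy_update:
  assumes inv: "state_inv t st" and x: "x \<in> U"
  shows "state_inv (Suc t) (greedy_update st x)"
proof -
  have "fst st \<subseteq> U" "card (fst st) \<le> t" using inv unfolding state_inv_def by auto
  moreover have "finite (fst st)" using \<open>fst st \<subseteq> U\<close> finite_U finite_subset by blast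
  ultimately have "card (insert x (fst st)) \<le> Suc t" by (simp add: card_insert_if)
  then show ?thesis
    using greedy_update_component[OF inv x] \<open>fst st \<subseteq> U\<close> x
    unfolding state_inv_def by (simp add: greedy_update_def)
qed

lemma potential_greedy_update:
  assumes "state_inv t st" "x \<in> U"
  shows "potential (greedy_update st x) = potential st + gain st x"
  unfolding potential_def using greedy_update_component(3)[OF assms] by (simp add: sum.distrib)

lemma gain_nonneg: "state_inv t st \<Longrightarrow> 0 \<le> gain st x"
  using Nabla_nonneg state_inv_finite by (intro sum_nonneg) blast

text \<open>\<open>selM st\<close> is compared with \<open>Opt\<close> padded with dummy items up to size \<open>l\<close>.\<close>
lemma sum_gain_selM_ge:
  assumes inv: "state_inv t st" and Opt: "Opt \<subseteq> \<Omega>" "card Opt \<le> l"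
  shows "Fobj f m k Opt - 2 * potential st \<le> (\<Sum>x\<in>selM st. gain st x)"
proof -
  have fin: "finite Opt" using Opt finite_ground finite_subset by blast
  obtain M where M: "Inl ` Opt \<subseteq> M" "M \<subseteq> U" "card M = l"
    using groundExt_padding[OF Opt(1) fin Opt(2)] by blast
  have finM: "finite M" using M(2) finite_U finite_subset by blast
  have component: "Max (f i ` {A. A \<subseteq> Opt \<and> card A \<le> k}) - 2 * fext f i (snd st i)
      \<le> (\<Sum>x\<in>M. Nabla f k i x (snd st i))" if i: "i < m" for i
  proof -
    let ?T = "snd st i"
    obtain Oi where Oi: "Oi \<subseteq> Opt" "card Oi \<le> k" "f i Oi = Max (f i ` {A. A \<subseteq> Opt \<and> card A \<le> k})"
      using Max_bounded_subsets_attained[OF fin] by blast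
    have "Inl ` Oi \<subseteq> U" "card (Inl ` Oi :: ('a + nat) set) \<le> k"
      using Oi Opt M by (auto simp: card_image)
    moreover have "?T \<subseteq> U" "card ?T \<le> k" using inv i unfolding state_inv_def by auto
    ultimately have "fext f i (Inl ` Oi) - 2 * fext f i ?T \<le> (\<Sum>x\<in>Inl ` Oi - ?T. Nabla f k i x ?T)"
      using sum_Nabla_ge[OF fext_monotone_submodular[OF i]] by blast
    also have "\<dots> \<le> (\<Sum>x\<in>M. Nabla f k i x ?T)"
      using Oi M finM Nabla_nonneg[OF state_inv_finite[OF inv i]] by (intro sum_mono2) auto
    finally show ?thesis using Oi(3) by (simp add: fext_def inj_vimage_image_eq)
  qed
  have "Fobj f m k Opt - 2 * potential st
      = (\<Sum>i<m. Max (f i ` {A. A \<subseteq> Opt \<and> card A \<le> k}) - 2 * fext f i (snd st i))"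
    unfolding Fobj_def potential_def by (simp add: sum_subtractf sum_distrib_left)
  also have "\<dots> \<le> (\<Sum>i<m. \<Sum>x\<in>M. Nabla f k i x (snd st i))"
    using component by (intro sum_mono) auto
  also have "\<dots> = (\<Sum>x\<in>M. gain st x)" by (rule sum.swap)
  also have "\<dots> \<le> (\<Sum>x\<in>selM st. gain st x)"
    using selM_ok M(2,3) unfolding validSelM_def by blast
  finally show ?thesis .
qed

lemma sgStep_support:
  assumes "state_inv t st"
  shows "finite (set_pmf (sgStep f m k selM rsel ord st))"
    and "\<And>st'. st' \<in> set_pmf (sgStep f m k selM rsel ord st) \<Longrightarrow> state_inv (Suc t) st'"
  using selM[of st] state_inv_greedy_update[OF assms] by (simp_all add: sgStep_eq) blast

lemma expected_potential_sgStep: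
  assumes "state_inv t st"
  shows "measure_pmf.expectation (sgStep f m k selM rsel ord st) potential
           = potential st + (\<Sum>x\<in>selM st. gain st x) / l"
proof -
  have "(\<Sum>x\<in>selM st. potential (greedy_update st x)) = (\<Sum>x\<in>selM st. potential st + gain st x)"
    using selM(1)[of st] potential_greedy_update[OF assms] by (intro sum.cong) auto
  then have "measure_pmf.expectation (sgStep f m k selM rsel ord st) potential
        = (\<Sum>x\<in>selM st. potential st + gain st x) / l"
    using selM(2-4) by (simp add: sgStep_eq integral_pmf_of_set)
  also have "\<dots> = potential st + (\<Sum>x\<in>selM st. gain st x) / l"
    using selM(2) l_pos by (simp add: sum.distrib field_simps)
  finally show ?thesis .
qed

lemma state_pmf_Suc: "state_pmf (Suc t) = bind_pmf (state_pmf t) (sgStep f m k selM rsel ord)"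
  by (simp add: state_pmf_def)

lemma state_pmf_support:
  "finite (set_pmf (state_pmf t)) \<and> (\<forall>st\<in>set_pmf (state_pmf t). state_inv t st)"
proof (induction t)
  case 0
  show ?case by (simp add: state_pmf_def state_inv_def)
next
  case (Suc t)
  then show ?case unfolding state_pmf_Suc set_bind_pmf using sgStep_support by auto
qed

lemma expected_potential_Suc:
  assumes Opt: "Opt \<subseteq> \<Omega>" "card Opt \<le> l"
  shows "(1 - 2 / l) * measure_pmf.expectation (state_pmf t) potential + Fobj f m k Opt / l
           \<le> measure_pmf.expectation (state_pmf (Suc t)) potential"
    and "measure_pmf.expectation (state_pmf t) potential
           \<le> measure_pmf.expectation (state_pmf (Suc t)) potential"
proof -
  let ?E = "measure_pmf.expectation (state_pmf t)"
  have fin: "finite (set_pmf (state_pmf t))" and inv: "\<And>st. st \<in> set_pmf (state_pmf t) \<Longrightarrow> state_inv t st"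
    using state_pmf_support by auto
  have lower: "?E h \<le> measure_pmf.expectation (state_pmf (Suc t)) potential"
    if "\<And>st. st \<in> set_pmf (state_pmf t) \<Longrightarrow>
          h st \<le> measure_pmf.expectation (sgStep f m k selM rsel ord st) potential" for h
    unfolding state_pmf_Suc using fin sgStep_support(1)[OF inv] that by (rule expectation_le_bind)
  have step: "potential st + (Fobj f m k Opt - 2 * potential st) / l
      \<le> measure_pmf.expectation (sgStep f m k selM rsel ord st) potential"
    "potential st \<le> measure_pmf.expectation (sgStep f m k selM rsel ord st) potential"
    if "st \<in> set_pmf (state_pmf t)" for st
  proof -
    have inv_st: "state_inv t st" using inv that .
    have "(Fobj f m k Opt - 2 * potential st) / l \<le> (\<Sum>x\<in>selM st. gain st x) / l"
      using sum_gain_selM_ge[OF inv_st Opt] by (rule divide_right_mono) simp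
    moreover have "0 \<le> (\<Sum>x\<in>selM st. gain st x) / l"
      using gain_nonneg[OF inv_st] by (simp add: sum_nonneg)
    ultimately show "potential st + (Fobj f m k Opt - 2 * potential st) / l
        \<le> measure_pmf.expectation (sgStep f m k selM rsel ord st) potential"
      "potential st \<le> measure_pmf.expectation (sgStep f m k selM rsel ord st) potential"
      unfolding expected_potential_sgStep[OF inv_st] by linarith+
  qed
  have "?E (\<lambda>st. potential st + (Fobj f m k Opt - 2 * potential st) / l)
      = ?E (\<lambda>st. (1 - 2 / l) * potential st + Fobj f m k Opt / l)"
    by (simp add: diff_divide_distrib algebra_simps)
  also have "\<dots> = (1 - 2 / l) * ?E potential + Fobj f m k Opt / l"
    using fin by (simp add: integrable_measure_pmf_finite)
  finally show "(1 - 2 / l) * ?E potential + Fobj f m k Opt / l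
      \<le> measure_pmf.expectation (state_pmf (Suc t)) potential"
    using lower[of "\<lambda>st. potential st + (Fobj f m k Opt - 2 * potential st) / l", OF step(1)] by simp
  show "?E potential \<le> measure_pmf.expectation (state_pmf (Suc t)) potential"
    using lower[of potential, OF step(2)] .
qed

lemma potential_le_Fobj:
  assumes "state_inv t st"
  shows "potential st \<le> Fobj f m k (Inl -` fst st)"
  unfolding potential_def Fobj_def
proof (rule sum_mono)
  fix i assume "i \<in> {..<m}"
  then have T: "snd st i \<subseteq> fst st" "card (snd st i) \<le> k" and S: "fst st \<subseteq> U"
    using assms unfolding state_inv_def by auto
  have fin: "finite (fst st)" using S finite_U by (rule finite_subset)
  have "card (Inl -` snd st i) \<le> k"
    using card_vimage_Inl_le[OF finite_subset[OF T(1) fin]] T(2) by (rule le_trans)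
  then have "Inl -` snd st i \<in> {A. A \<subseteq> Inl -` fst st \<and> card A \<le> k}"
    using vimage_mono[OF T(1), of Inl] by simp
  moreover have "finite {A. A \<subseteq> Inl -` fst st \<and> card A \<le> k}"
    using fin by (simp add: finite_vimageI)
  ultimately show "fext f i (snd st i) \<le> Max (f i ` {A. A \<subseteq> Inl -` fst st \<and> card A \<le> k})"
    unfolding fext_def by (intro Max_ge finite_imageI imageI)
qed

lemma samplingGreedy_eq: "samplingGreedy f m k l selM rsel ord = map_pmf (\<lambda>st. Inl -` fst st) (state_pmf l)"
  unfolding samplingGreedy_def state_pmf_def ..

lemma samplingGreedy_feasible:
  assumes "S \<in> set_pmf (samplingGreedy f m k l selM rsel ord)"
  shows "S \<subseteq> \<Omega> \<and> card S \<le> l"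
proof -
  obtain st where st: "st \<in> set_pmf (state_pmf l)" "S = Inl -` fst st"
    using assms unfolding samplingGreedy_eq by auto
  then have S: "fst st \<subseteq> U" "card (fst st) \<le> l"
    using state_pmf_support unfolding state_inv_def by auto
  have "card S \<le> l"
    unfolding st(2) using card_vimage_Inl_le[OF finite_subset[OF S(1) finite_U]] S(2) by (rule le_trans)
  moreover have "S \<subseteq> \<Omega>" using S(1) st(2) by (auto simp: groundExt_def)
  ultimately show ?thesis by blast
qed

lemma samplingGreedy_approximation:
  assumes Opt: "Opt \<subseteq> \<Omega>" "card Opt \<le> l"
  shows "(1 - 1 / exp 2) / 2 * Fobj f m k Opt
           \<le> measure_pmf.expectation (samplingGreedy f m k l selM rsel ord) (Fobj f m k)"
proof -
  let ?a = "\<lambda>t. measure_pmf.expectation (state_pmf t) potential"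
  have fin: "finite (set_pmf (state_pmf l))" and inv: "\<And>st. st \<in> set_pmf (state_pmf l) \<Longrightarrow> state_inv l st"
    using state_pmf_support by auto
  have empty: "0 \<le> f i {}" "0 \<le> fext f i {}" if "i < m" for i
    using monotone_submodular.nonneg[OF objectives[OF that]]
      monotone_submodular.nonneg[OF fext_monotone_submodular[OF that]] by blast+
  have opt: "0 \<le> Fobj f m k Opt"
    using Fobj_nonneg[OF finite_subset[OF Opt(1) finite_ground]] empty(1) by blast
  have "0 \<le> (\<Sum>i<m. fext f i {})" using empty(2) by (intro sum_nonneg) simp
  then have a0: "0 \<le> ?a 0" by (simp add: state_pmf_def potential_def)
  have "(1 - 1 / exp 2) / 2 * Fobj f m k Opt \<le> ?a l"
    using recurrence_lower_bound[where a = ?a, OF l_pos opt a0 expected_potential_Suc[OF Opt]] .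
  also have "?a l \<le> measure_pmf.expectation (state_pmf l) (\<lambda>st. Fobj f m k (Inl -` fst st))"
    by (intro integral_mono_AE AE_pmfI integrable_measure_pmf_finite fin potential_le_Fobj[OF inv])
  finally show ?thesis unfolding samplingGreedy_eq by simp
qed
end

text \<open>The order \<open>ord\<close> is irrelevant since Trim removes nothing from the sets \<open>T\<^sub>i\<close>.\<close>
theorem mainTheorem5:
  fixes \<Omega> :: "'a set" and n k l m :: nat and f :: "nat \<Rightarrow> 'a set \<Rightarrow> real"
    and selM :: "'a sg_state \<Rightarrow> ('a + nat) set"
    and rsel :: "nat \<Rightarrow> 'a + nat \<Rightarrow> ('a + nat) set \<Rightarrow> 'a + nat"
    and ord :: "('a + nat) list" and Opt :: "'a set"
  assumes fin: "finite \<Omega>" and n_def: "card \<Omega> = n"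
    and k1: "k \<ge> 1" and l1: "l \<ge> 1"
    and nonneg: "\<And>i A. i < m \<Longrightarrow> A \<subseteq> \<Omega> \<Longrightarrow> f i A \<ge> 0"
    and mono: "\<And>i A B. i < m \<Longrightarrow> A \<subseteq> B \<Longrightarrow> B \<subseteq> \<Omega> \<Longrightarrow> f i A \<le> f i B"
    and submod: "\<And>i A A' x. i < m \<Longrightarrow> A \<subseteq> A' \<Longrightarrow> A' \<subseteq> \<Omega> \<Longrightarrow> x \<in> \<Omega> \<Longrightarrow> x \<notin> A' \<Longrightarrow>
                   f i (insert x A) - f i A \<ge> f i (insert x A') - f i A'"
    and selM_ok: "validSelM f m k \<Omega> l selM"
    and rsel_ok: "validRsel f rsel"
    and ord_ok: "distinct ord" "set ord = groundExt \<Omega> l"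
    and O_sub: "Opt \<subseteq> \<Omega>" and O_card: "card Opt \<le> l"
    and O_opt: "\<And>S'. S' \<subseteq> \<Omega> \<Longrightarrow> card S' \<le> l \<Longrightarrow> Fobj f m k S' \<le> Fobj f m k Opt"
  shows "(\<forall>S \<in> set_pmf (samplingGreedy f m k l selM rsel ord). S \<subseteq> \<Omega> \<and> card S \<le> l)
       \<and> measure_pmf.expectation (samplingGreedy f m k l selM rsel ord) (Fobj f m k)
           \<ge> (1 - 1 / exp 2) / 2 * Fobj f m k Opt"
proof -
  have "monotone_submodular \<Omega> (f i)" if i: "i < m" for i
    by unfold_locales (use fin nonneg[OF i] mono[OF i] submod[OF i] in blast)+
  then interpret sampling_greedy \<Omega> k l m f selM rsel ord
    using fin k1 l1 selM_ok rsel_ok by (intro sampling_greedy.intro)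
  show ?thesis
    using samplingGreedy_feasible samplingGreedy_approximation[OF O_sub O_card] by blast
qed

end
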